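(* Let $X\supseteq\omega_1$. Then $\mathrm{SRP}(X)$ holds if and only if for every projectively stationary $S\subseteq[X]^\omega$ there exists a continuous increasing function $f:\omega_1\to S$ with $\bigcup\mathrm{ran}(f)\supseteq\omega_1$.
   Context: For an uncountable set $Z$, a club on $[Z]^\omega$ is a set of the form $\{Y\in[Z]^\omega: f[Y^{<\omega}]\subseteq Y\}$ for some $f:Z^{<\omega}\to Z$ (clubs on $\mathcal P(Z)$ are defined the same way with all subsets), and a set is stationary iff it meets every club. A set $S\subseteq[X]^\omega$ is projectively stationary iff $\omega_1\subseteq X$, $S$ is stationary, and $\{A\cap\omega_1: A\in S\}$ contains a club on $[\omega_1]^\omega$. $S$ strongly reflects on $Z\subseteq X$ iff $S\cap[Z]^\omega$ contains a club on $[Z]^\omega$. $\mathrm{SRP}(X)$: every projectively stationary $S\subseteq[X]^\omega$ strongly reflects on some $Z$ with $\omega_1\subseteq Z\subseteq X$ and $|Z|=\omega_1$. A function $f$ from an ordinal into sets is increasing iff $\alpha<\beta$ implies $f(\alpha)\subseteq f(\beta)$, and continuous iff $f(\lambda)=\bigcup_{\alpha<\lambda}f(\alpha)$ for every limit $\lambda$ in its domain. *)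

theory Defs
  imports Main "HOL-Library.Countable_Set" "HOL-Library.Equipollence"
begin

text \<open>omega1 W r: the set W, well-ordered by r, is (an isomorphic copy of) the ordinal omega_1:
  an uncountable well-order all of whose proper initial segments are countable.\<close>
definition omega1 :: "'a set \<Rightarrow> 'a rel \<Rightarrow> bool" where
  "omega1 W r \<longleftrightarrow> well_order_on W r \<and> \<not> countable W \<and>
     (\<forall>a\<in>W. countable {b. (b, a) \<in> r})"

definition ctbl_subsets :: "'a set \<Rightarrow> 'a set set" where
  "ctbl_subsets Z = {Y. Y \<subseteq> Z \<and> countable Y}"

text \<open>Club on [Z]^omega given by some f : Z^{<omega} \<rightarrow> Z (finite sequences = lists).\<close>
definition is_club :: "'a set \<Rightarrow> 'a set set \<Rightarrow> bool" where
  "is_club Z C \<longleftrightarrow> (\<exists>g :: 'a list \<Rightarrow> 'a. (\<forall>ys. set ys \<subseteq> Z \<longrightarrow> g ys \<in> Z) \<and>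
      C = {Y \<in> ctbl_subsets Z. \<forall>ys. set ys \<subseteq> Y \<longrightarrow> g ys \<in> Y})"

definition stationary :: "'a set \<Rightarrow> 'a set set \<Rightarrow> bool" where
  "stationary Z S \<longleftrightarrow> S \<subseteq> ctbl_subsets Z \<and> (\<forall>C. is_club Z C \<longrightarrow> S \<inter> C \<noteq> {})"

definition proj_stationary :: "'a set \<Rightarrow> 'a set \<Rightarrow> 'a set set \<Rightarrow> bool" where
  "proj_stationary W X S \<longleftrightarrow> W \<subseteq> X \<and> stationary X S \<and>
     (\<exists>C. is_club W C \<and> C \<subseteq> (\<lambda>A. A \<inter> W) ` S)"

definition strongly_reflects :: "'a set set \<Rightarrow> 'a set \<Rightarrow> bool" where
  "strongly_reflects S Z \<longleftrightarrow> (\<exists>C. is_club Z C \<and> C \<subseteq> S \<inter> ctbl_subsets Z)"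

definition SRP :: "'a set \<Rightarrow> 'a set \<Rightarrow> bool" where
  "SRP W X \<longleftrightarrow> (\<forall>S. S \<subseteq> ctbl_subsets X \<longrightarrow> proj_stationary W X S \<longrightarrow>
     (\<exists>Z. W \<subseteq> Z \<and> Z \<subseteq> X \<and> Z \<approx> W \<and> strongly_reflects S Z))"

text \<open>Limit points of the well-order r (0 is not a limit).\<close>
definition is_limit :: "'a rel \<Rightarrow> 'a \<Rightarrow> bool" where
  "is_limit r l \<longleftrightarrow> (\<exists>a. (a, l) \<in> r \<and> a \<noteq> l) \<and>
     (\<forall>a. (a, l) \<in> r \<and> a \<noteq> l \<longrightarrow> (\<exists>b. (a, b) \<in> r \<and> a \<noteq> b \<and> (b, l) \<in> r \<and> b \<noteq> l))"

definition increasing_on :: "'a set \<Rightarrow> 'a rel \<Rightarrow> ('a \<Rightarrow> 'b set) \<Rightarrow> bool" where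
  "increasing_on W r f \<longleftrightarrow> (\<forall>a\<in>W. \<forall>b\<in>W. (a, b) \<in> r \<and> a \<noteq> b \<longrightarrow> f a \<subseteq> f b)"

definition continuous_on_ord :: "'a set \<Rightarrow> 'a rel \<Rightarrow> ('a \<Rightarrow> 'b set) \<Rightarrow> bool" where
  "continuous_on_ord W r f \<longleftrightarrow>
     (\<forall>l\<in>W. is_limit r l \<longrightarrow> f l = (\<Union>a\<in>{a. (a, l) \<in> r \<and> a \<noteq> l}. f a))"

end

theory Submission
  imports Defs
begin

text \<open>
  If S contains a club on Z, where Z has size \<open>\<omega>\<^sub>1\<close>, let g generate that club and let h
  enumerate Z along \<open>\<omega>\<^sub>1\<close>. The closures under g of the images under h of the initial
  segments of \<open>\<omega>\<^sub>1\<close> form a continuous increasing chain of members of the club that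
  exhausts Z.

  Conversely, the union Z of a continuous increasing chain through S has size \<open>\<omega>\<^sub>1\<close>.
  Choose g so that a g-closed set containing z contains the whole chain member from which z was
  picked. Then every countable g-closed subset of Z is the union of countably many chain members,
  which by continuity is the member at their supremum.
\<close>

lemma underS_conv: "underS r a = {b. (b, a) \<in> r \<and> b \<noteq> a}"
  by (auto simp: underS_def)

lemma omega1_orderD:
  assumes "omega1 W r"
  shows "r \<subseteq> W \<times> W" "refl_on W r" "trans r" "antisym r" "total_on W r"
  using assms unfolding omega1_def well_order_on_def linear_order_on_def
    partial_order_on_def preorder_on_def by auto

lemma omega1_domain: "omega1 W r \<Longrightarrow> (a, b) \<in> r \<Longrightarrow> a \<in> W \<and> b \<in> W"
  using omega1_orderD(1) by blast

lemma omega1_total: "omega1 W r \<Longrightarrow> a \<in> W \<Longrightarrow> b \<in> W \<Longrightarrow> (a, b) \<in> r \<or> (b, a) \<in> r"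
  using omega1_orderD(2,5) by (metis refl_onD total_on_def)

lemma omega1_underS_subset: "omega1 W r \<Longrightarrow> underS r a \<subseteq> W"
  using omega1_domain by (fastforce simp: underS_conv)

lemma omega1_countable_underS:
  assumes "omega1 W r"
  shows "countable (underS r a)"
proof (cases "a \<in> W")
  case True
  then have "countable {b. (b, a) \<in> r}" using assms unfolding omega1_def by blast
  then show ?thesis by (rule countable_subset[rotated]) (auto simp: underS_conv)
next
  case False
  then have "underS r a = {}" using omega1_domain[OF assms] by (auto simp: underS_conv)
  then show ?thesis by simp
qed

lemma omega1_strict_upper_bound:
  assumes om: "omega1 W r" and B: "countable B" "B \<subseteq> W"
  obtains c where "c \<in> W" "\<forall>b\<in>B. (b, c) \<in> r \<and> b \<noteq> c"
proof -
  have "countable (\<Union>b\<in>B. {x. (x, b) \<in> r})"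
    using B om unfolding omega1_def by blast
  moreover have "\<not> countable W" using om unfolding omega1_def by blast
  ultimately obtain c where c: "c \<in> W" "c \<notin> (\<Union>b\<in>B. {x. (x, b) \<in> r})"
    by (metis countable_subset subsetI)
  have "(b, c) \<in> r \<and> b \<noteq> c" if "b \<in> B" for b
    using that c B omega1_total[OF om, of b c] omega1_orderD(2)[OF om]
    by (auto dest: refl_onD)
  with c show thesis using that by blast
qed

lemma omega1_no_greatest:
  assumes "omega1 W r" "b \<in> W"
  obtains c where "c \<in> W" "b \<in> underS r c"
proof -
  obtain c where "c \<in> W" "\<forall>x\<in>{b}. (x, c) \<in> r \<and> x \<noteq> c"
    using omega1_strict_upper_bound[OF assms(1), of "{b}"] assms(2) by auto
  then show thesis using that by (auto simp: underS_conv)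
qed

lemma omega1_supremum:
  assumes om: "omega1 W r" and B: "countable B" "B \<subseteq> W"
  obtains \<delta> where "\<delta> \<in> W" "\<forall>b\<in>B. (b, \<delta>) \<in> r"
    "\<forall>a \<in> underS r \<delta>. \<exists>b\<in>B. (a, b) \<in> r \<and> a \<noteq> b"
proof -
  define U where "U = {c \<in> W. \<forall>b\<in>B. (b, c) \<in> r}"
  obtain c where "c \<in> W" "\<forall>b\<in>B. (b, c) \<in> r \<and> b \<noteq> c"
    by (rule omega1_strict_upper_bound[OF om B])
  then have "c \<in> U" unfolding U_def by blast
  have "wf (r - Id)" using om unfolding omega1_def well_order_on_def by blast
  then obtain \<delta> where \<delta>: "\<delta> \<in> U" and least: "\<And>y. (y, \<delta>) \<in> r - Id \<Longrightarrow> y \<notin> U"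
    using wfE_min \<open>c \<in> U\<close> by metis
  have "\<exists>b\<in>B. (a, b) \<in> r \<and> a \<noteq> b" if a: "a \<in> underS r \<delta>" for a
  proof -
    have "(a, \<delta>) \<in> r - Id" using a by (auto simp: underS_conv)
    then have "a \<in> W" "a \<notin> U" using least omega1_domain[OF om] by blast+
    then obtain b where b: "b \<in> B" "(b, a) \<notin> r" unfolding U_def by blast
    then have "(a, b) \<in> r" using omega1_total[OF om \<open>a \<in> W\<close>, of b] B(2) by blast
    moreover have "a \<noteq> b" using b \<open>a \<in> W\<close> refl_onD[OF omega1_orderD(2)[OF om]] by blast
    ultimately show ?thesis using b(1) by blast
  qed
  with \<delta> show thesis using that unfolding U_def by blast
qed

lemma increasing_onD:
  assumes "increasing_on W r f" "a \<in> W" "b \<in> W" "(a, b) \<in> r"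
  shows "f a \<subseteq> f b"
  using assms unfolding increasing_on_def by (cases "a = b") auto

lemma increasing_on_chain:
  assumes "total_on W r" "increasing_on W r f" "A \<subseteq> W"
  shows "subset.chain UNIV (f ` A)"
proof -
  have "f a \<subseteq> f b \<or> f b \<subseteq> f a" if "a \<in> A" "b \<in> A" for a b
    using assms that unfolding total_on_def increasing_on_def by (cases "a = b") blast+
  then show ?thesis by (auto simp: subset_chain_def)
qed

lemma continuous_on_ordD:
  "continuous_on_ord W r f \<Longrightarrow> l \<in> W \<Longrightarrow> is_limit r l \<Longrightarrow> f l = \<Union> (f ` underS r l)"
  unfolding continuous_on_ord_def underS_conv by blast

lemma continuous_on_ordI:
  "(\<And>l. l \<in> W \<Longrightarrow> is_limit r l \<Longrightarrow> f l = \<Union> (f ` underS r l)) \<Longrightarrow> continuous_on_ord W r f"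
  unfolding continuous_on_ord_def underS_conv by blast

lemma continuous_increasing_Union_countable:
  assumes om: "omega1 W r" and inc: "increasing_on W r f" and cont: "continuous_on_ord W r f"
    and B: "countable B" "B \<subseteq> W" "B \<noteq> {}"
  obtains \<delta> where "\<delta> \<in> W" "f \<delta> = (\<Union>b\<in>B. f b)"
proof -
  obtain \<delta> where \<delta>: "\<delta> \<in> W" "\<forall>b\<in>B. (b, \<delta>) \<in> r"
    and cofinal: "\<forall>a \<in> underS r \<delta>. \<exists>b\<in>B. (a, b) \<in> r \<and> a \<noteq> b"
    using omega1_supremum[OF om B(1,2)] by blast
  have below: "f b \<subseteq> f \<delta>" if "b \<in> B" for b
    using increasing_onD[OF inc] \<delta> B that by blast
  show thesis
  proof (cases "\<delta> \<in> B")
    case True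
    with below show thesis using that \<delta>(1) by blast
  next
    case False
    then have strict: "B \<subseteq> underS r \<delta>" using \<delta>(2) by (auto simp: underS_conv)
    have "is_limit r \<delta>"
      unfolding is_limit_def using strict cofinal B(3) by (fastforce simp: underS_conv)
    then have "f \<delta> = \<Union> (f ` underS r \<delta>)" using continuous_on_ordD[OF cont \<delta>(1)] by blast
    also have "\<dots> = (\<Union>b\<in>B. f b)"
    proof (rule antisym)
      show "\<Union> (f ` underS r \<delta>) \<subseteq> (\<Union>b\<in>B. f b)"
        using cofinal increasing_onD[OF inc] omega1_domain[OF om] B(2)
        by (fastforce simp: underS_conv)
    qed (use strict in blast)
    finally show thesis using that \<delta>(1) by blast
  qed
qed

definition closed_under :: "('a list \<Rightarrow> 'a) \<Rightarrow> 'a set \<Rightarrow> bool" where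
  "closed_under g Y \<longleftrightarrow> (\<forall>ys. set ys \<subseteq> Y \<longrightarrow> g ys \<in> Y)"

lemma is_club_iff:
  "is_club Z C \<longleftrightarrow> (\<exists>g. closed_under g Z \<and> C = {Y \<in> ctbl_subsets Z. closed_under g Y})"
  unfolding is_club_def closed_under_def ..

lemma closed_under_Union_chain:
  assumes "subset.chain \<A> \<Y>" "\<Y> \<noteq> {}" "\<forall>Y\<in>\<Y>. closed_under g Y"
  shows "closed_under g (\<Union>\<Y>)"
  unfolding closed_under_def
proof (intro allI impI)
  fix ys assume "set ys \<subseteq> \<Union>\<Y>"
  then obtain Y where "Y \<in> \<Y>" "set ys \<subseteq> Y"
    using finite_subset_Union_chain[OF finite_set _ assms(2,1)] by blast
  then show "g ys \<in> \<Union>\<Y>" using assms(3) unfolding closed_under_def by blast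
qed

primrec closure_under_iter :: "('a list \<Rightarrow> 'a) \<Rightarrow> 'a set \<Rightarrow> nat \<Rightarrow> 'a set" where
  "closure_under_iter g A 0 = A"
| "closure_under_iter g A (Suc n) =
     closure_under_iter g A n \<union> g ` {ys. set ys \<subseteq> closure_under_iter g A n}"

lemma closure_under_iter_mono: "m \<le> n \<Longrightarrow> closure_under_iter g A m \<subseteq> closure_under_iter g A n"
  by (induction n rule: dec_induct) auto

definition closure_under :: "('a list \<Rightarrow> 'a) \<Rightarrow> 'a set \<Rightarrow> 'a set" where
  "closure_under g A = (\<Union>n. closure_under_iter g A n)"

lemma countable_closure_under: "countable A \<Longrightarrow> countable (closure_under g A)"
proof -
  assume "countable A"
  then have "countable (closure_under_iter g A n)" for n
  proof (induction n)
    case (Suc n)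
    have "{ys. set ys \<subseteq> closure_under_iter g A n} = lists (closure_under_iter g A n)" by auto
    then show ?case using Suc by simp
  qed simp
  then show ?thesis unfolding closure_under_def by blast
qed

lemma closure_under_superset: "A \<subseteq> closure_under g A"
  unfolding closure_under_def by (metis UNIV_I UN_upper closure_under_iter.simps(1))

lemma closed_under_closure_under: "closed_under g (closure_under g A)"
  unfolding closed_under_def
proof (intro allI impI)
  fix ys assume ys: "set ys \<subseteq> closure_under g A"
  have "subset.chain UNIV (range (closure_under_iter g A))"
    by (rule increasing_on_chain[of UNIV "{(m, n). m \<le> n}"])
      (auto simp: total_on_def increasing_on_def closure_under_iter_mono)
  then obtain n where "set ys \<subseteq> closure_under_iter g A n"
    using finite_subset_Union_chain[OF finite_set] ys unfolding closure_under_def by blast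
  then have "g ys \<in> closure_under_iter g A (Suc n)" by simp
  then show "g ys \<in> closure_under g A" unfolding closure_under_def by blast
qed

lemma closure_under_least:
  assumes "A \<subseteq> Y" "closed_under g Y"
  shows "closure_under g A \<subseteq> Y"
proof -
  have "closure_under_iter g A n \<subseteq> Y" for n
    by (induction n) (use assms in \<open>auto simp: closed_under_def\<close>)
  then show ?thesis unfolding closure_under_def by blast
qed

lemma closure_under_mono: "A \<subseteq> B \<Longrightarrow> closure_under g A \<subseteq> closure_under g B"
  by (meson closure_under_least closure_under_superset closed_under_closure_under order_trans)

lemma increasing_on_closure_under_underS:
  assumes "omega1 W r"
  shows "increasing_on W r (\<lambda>a. closure_under g (h ` underS r a))"
  unfolding increasing_on_def
  using underS_incr[OF omega1_orderD(3,4)[OF assms]] by (simp add: closure_under_mono image_mono)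

lemma continuous_on_ord_closure_under_underS:
  assumes om: "omega1 W r"
  shows "continuous_on_ord W r (\<lambda>a. closure_under g (h ` underS r a))"
proof (rule continuous_on_ordI)
  fix l assume l: "l \<in> W" "is_limit r l"
  let ?F = "\<lambda>a. closure_under g (h ` underS r a)"
  have inc: "increasing_on W r ?F" by (rule increasing_on_closure_under_underS[OF om])
  have below: "underS r l \<subseteq> W" by (rule omega1_underS_subset[OF om])
  show "?F l = \<Union> (?F ` underS r l)"
  proof (rule antisym)
    have "h ` underS r l \<subseteq> \<Union> (?F ` underS r l)"
    proof
      fix z assume "z \<in> h ` underS r l"
      then obtain b where b: "b \<in> underS r l" "z = h b" by blast
      then obtain c where c: "c \<in> underS r l" "b \<in> underS r c"
        using l(2) unfolding is_limit_def underS_conv by blast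
      then have "z \<in> ?F c" using b(2) closure_under_superset[of "h ` underS r c" g] by blast
      with c(1) show "z \<in> \<Union> (?F ` underS r l)" by blast
    qed
    moreover have "closed_under g (\<Union> (?F ` underS r l))"
    proof (rule closed_under_Union_chain)
      show "subset.chain UNIV (?F ` underS r l)"
        using increasing_on_chain[OF omega1_orderD(5)[OF om] inc below] .
      show "?F ` underS r l \<noteq> {}" using l(2) unfolding is_limit_def underS_conv by blast
      show "\<forall>Y\<in>?F ` underS r l. closed_under g Y" using closed_under_closure_under by blast
    qed
    ultimately show "?F l \<subseteq> \<Union> (?F ` underS r l)" by (rule closure_under_least)
    show "\<Union> (?F ` underS r l) \<subseteq> ?F l"
    proof (rule UN_least)
      fix a assume "a \<in> underS r l"
      then have "a \<in> W" "(a, l) \<in> r" using below by (auto simp: underS_conv)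
      then show "?F a \<subseteq> ?F l" using increasing_onD[OF inc _ l(1)] by blast
    qed
  qed
qed

lemma club_contains_continuous_chain:
  assumes om: "omega1 W r" and ZW: "Z \<approx> W" and club: "is_club Z C"
  obtains f where "\<forall>a\<in>W. f a \<in> C" "increasing_on W r f" "continuous_on_ord W r f"
    "(\<Union>a\<in>W. f a) = Z"
proof -
  obtain g where g: "closed_under g Z" and C: "C = {Y \<in> ctbl_subsets Z. closed_under g Y}"
    using club unfolding is_club_iff by blast
  obtain h where "bij_betw h W Z" using ZW eqpoll_sym unfolding eqpoll_def by blast
  then have hW: "h ` W = Z" by (rule bij_betw_imp_surj_on)
  define F where "F a = closure_under g (h ` underS r a)" for a
  have FC: "F a \<in> C" for a
  proof -
    have "h ` underS r a \<subseteq> Z" using hW omega1_underS_subset[OF om] by blast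
    then have "F a \<subseteq> Z" unfolding F_def using g by (rule closure_under_least)
    moreover have "countable (F a)"
      unfolding F_def by (intro countable_closure_under countable_image omega1_countable_underS[OF om])
    ultimately show ?thesis unfolding C ctbl_subsets_def by (simp add: F_def closed_under_closure_under)
  qed
  have "(\<Union>a\<in>W. F a) = Z"
  proof
    show "(\<Union>a\<in>W. F a) \<subseteq> Z" using FC unfolding C ctbl_subsets_def by blast
    show "Z \<subseteq> (\<Union>a\<in>W. F a)"
    proof
      fix z assume "z \<in> Z"
      then obtain b where b: "b \<in> W" "z = h b" using hW by blast
      obtain c where "c \<in> W" "b \<in> underS r c" using omega1_no_greatest[OF om b(1)] .
      then have "z \<in> h ` underS r c" using b(2) by blast
      then have "z \<in> F c" unfolding F_def by (rule subsetD[OF closure_under_superset])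
      with \<open>c \<in> W\<close> show "z \<in> (\<Union>a\<in>W. F a)" by blast
    qed
  qed
  with FC show thesis
    using that[OF _ increasing_on_closure_under_underS[OF om] continuous_on_ord_closure_under_underS[OF om]]
    unfolding F_def by blast
qed

lemma UN_countable_lepoll:
  includes cardinal_syntax
  assumes W: "infinite W" and ct: "\<forall>a\<in>W. countable (f a)"
  shows "(\<Union>a\<in>W. f a) \<lesssim> W"
proof -
  have "|f a| \<le>o |W|" if "a \<in> W" for a
  proof -
    have "f a \<lesssim> (UNIV :: nat set)" using ct that unfolding countable_def lepoll_def by blast
    moreover have "(UNIV :: nat set) \<lesssim> W" using W by (simp add: infinite_le_lepoll)
    ultimately have "f a \<lesssim> W" by (rule lepoll_trans)
    then show ?thesis unfolding lepoll_def card_of_ordLeq .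
  qed
  then have "|\<Union>a\<in>W. f a| \<le>o |W|"
    using card_of_UNION_ordLeq_infinite[OF W ordIso_imp_ordLeq[OF card_of_refl]] by blast
  then show ?thesis unfolding lepoll_def card_of_ordLeq[symmetric] .
qed

lemma continuous_chain_contains_club:
  assumes om: "omega1 W r" and ct: "\<forall>a\<in>W. countable (f a)"
    and inc: "increasing_on W r f" and cont: "continuous_on_ord W r f"
    and ne: "(\<Union>a\<in>W. f a) \<noteq> {}"
  obtains C where "is_club (\<Union>a\<in>W. f a) C" "C \<subseteq> f ` W"
proof -
  define Z where "Z = (\<Union>a\<in>W. f a)"
  obtain z0 where "z0 \<in> Z" using ne unfolding Z_def by blast
  define \<rho> where "\<rho> z = (SOME a. a \<in> W \<and> z \<in> f a)" for z
  have \<rho>: "\<rho> z \<in> W \<and> z \<in> f (\<rho> z)" if "z \<in> Z" for z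
    using that unfolding \<rho>_def Z_def by (intro someI_ex[where P = "\<lambda>a. a \<in> W \<and> z \<in> f a"]) blast
  text \<open>The lists of length \<open>n + 1\<close> with head y enumerate \<open>f (\<rho> y)\<close>, and \<open>[]\<close> names a
    point of Z, so every g-closed subset of Z is a nonempty union of chain members.\<close>
  define g where "g ys = (case ys of [] \<Rightarrow> z0 | y # ys' \<Rightarrow> from_nat_into (f (\<rho> y)) (length ys'))"
    for ys
  have "closed_under g Z"
    unfolding closed_under_def
  proof (intro allI impI)
    fix ys assume ys: "set ys \<subseteq> Z"
    show "g ys \<in> Z"
    proof (cases ys)
      case Nil
      then show ?thesis using \<open>z0 \<in> Z\<close> by (simp add: g_def)
    next
      case (Cons y ys')
      then have "\<rho> y \<in> W" "f (\<rho> y) \<noteq> {}" using \<rho> ys by auto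
      then have "g ys \<in> f (\<rho> y)" using Cons by (simp add: g_def from_nat_into)
      then show ?thesis using \<open>\<rho> y \<in> W\<close> unfolding Z_def by blast
    qed
  qed
  define C where "C = {Y \<in> ctbl_subsets Z. closed_under g Y}"
  have "is_club Z C" unfolding is_club_iff C_def using \<open>closed_under g Z\<close> by blast
  moreover have "C \<subseteq> f ` W"
  proof
    fix Y assume "Y \<in> C"
    then have Y: "Y \<subseteq> Z" "countable Y" "closed_under g Y" unfolding C_def ctbl_subsets_def by auto
    have "f (\<rho> y) \<subseteq> Y" if "y \<in> Y" for y
    proof
      fix x assume x: "x \<in> f (\<rho> y)"
      have "countable (f (\<rho> y))" using ct \<rho> Y(1) that by blast
      then obtain n where "x = from_nat_into (f (\<rho> y)) n" using x subset_range_from_nat_into by blast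
      then have "x = g (replicate (Suc n) y)" by (simp add: g_def)
      moreover have "set (replicate (Suc n) y) \<subseteq> Y" unfolding set_replicate_Suc using that by blast
      ultimately show "x \<in> Y" using Y(3) unfolding closed_under_def by blast
    qed
    moreover have "y \<in> f (\<rho> y)" "\<rho> y \<in> W" if "y \<in> Y" for y using \<rho> Y(1) that by blast+
    ultimately have Y_Union: "Y = (\<Union>b\<in>\<rho> ` Y. f b)" and "\<rho> ` Y \<subseteq> W" by blast+
    have "g [] \<in> Y" using Y(3) unfolding closed_under_def by simp
    then have "\<rho> ` Y \<noteq> {}" by auto
    then obtain \<delta> where "\<delta> \<in> W" "f \<delta> = (\<Union>b\<in>\<rho> ` Y. f b)"
      by (rule continuous_increasing_Union_countable[OF om inc cont countable_image[OF Y(2)] \<open>\<rho> ` Y \<subseteq> W\<close>])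
    with Y_Union show "Y \<in> f ` W" by auto
  qed
  ultimately show thesis using that unfolding Z_def by blast
qed

lemma is_club_subset_ctbl_subsets: "is_club Z C \<Longrightarrow> C \<subseteq> ctbl_subsets Z"
  unfolding is_club_def by blast

lemma strongly_reflects_continuous_chain:
  assumes om: "omega1 W r" and "W \<subseteq> Z" "Z \<approx> W" "strongly_reflects S Z"
  obtains f where "\<forall>a\<in>W. f a \<in> S" "increasing_on W r f" "continuous_on_ord W r f"
    "W \<subseteq> \<Union> (f ` W)"
proof -
  obtain C where C: "is_club Z C" "C \<subseteq> S" using assms(4) unfolding strongly_reflects_def by blast
  obtain f where f: "\<forall>a\<in>W. f a \<in> C" "increasing_on W r f" "continuous_on_ord W r f"
    "(\<Union>a\<in>W. f a) = Z"
    by (rule club_contains_continuous_chain[OF om assms(3) C(1)])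
  show thesis
  proof (rule that)
    show "\<forall>a\<in>W. f a \<in> S" using f(1) C(2) by blast
    show "W \<subseteq> \<Union> (f ` W)" using f(4) assms(2) by simp
  qed (fact f)+
qed

lemma Union_continuous_chain_strongly_reflects:
  assumes om: "omega1 W r" and fS: "f ` W \<subseteq> S" and ct: "\<forall>a\<in>W. countable (f a)"
    and inc: "increasing_on W r f" and cont: "continuous_on_ord W r f"
    and WZ: "W \<subseteq> \<Union> (f ` W)"
  shows "\<Union> (f ` W) \<approx> W" "strongly_reflects S (\<Union> (f ` W))"
proof -
  have "infinite W" using om countable_finite unfolding omega1_def by blast
  show "\<Union> (f ` W) \<approx> W"
    by (rule lepoll_antisym[OF UN_countable_lepoll[OF \<open>infinite W\<close> ct] subset_imp_lepoll[OF WZ]])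
  have "W \<noteq> {}" using \<open>infinite W\<close> by auto
  then have "\<Union> (f ` W) \<noteq> {}" using WZ by auto
  then obtain C where C: "is_club (\<Union> (f ` W)) C" "C \<subseteq> f ` W"
    by (rule continuous_chain_contains_club[OF om ct inc cont])
  have "C \<subseteq> S \<inter> ctbl_subsets (\<Union> (f ` W))"
    using C(2) fS is_club_subset_ctbl_subsets[OF C(1)] by blast
  with C(1) show "strongly_reflects S (\<Union> (f ` W))" unfolding strongly_reflects_def by blast
qed

theorem mainTheorem12:
  fixes X W :: "'a set" and r :: "'a rel"
  assumes "omega1 W r" and "W \<subseteq> X"
  shows "SRP W X \<longleftrightarrow>
    (\<forall>S. S \<subseteq> ctbl_subsets X \<longrightarrow> proj_stationary W X S \<longrightarrow>
       (\<exists>f :: 'a \<Rightarrow> 'a set. (\<forall>a\<in>W. f a \<in> S) \<and> increasing_on W r f \<and>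
           continuous_on_ord W r f \<and> W \<subseteq> \<Union> (f ` W)))"
    (is "_ \<longleftrightarrow> (\<forall>S. _ \<longrightarrow> _ \<longrightarrow> ?chain S)")
proof (intro iffI allI impI)
  fix S assume srp: "SRP W X" and S: "S \<subseteq> ctbl_subsets X" "proj_stationary W X S"
  obtain Z where "W \<subseteq> Z" "Z \<approx> W" "strongly_reflects S Z"
    using srp[unfolded SRP_def, rule_format, OF S] by blast
  then obtain f where "\<forall>a\<in>W. f a \<in> S" "increasing_on W r f" "continuous_on_ord W r f"
    "W \<subseteq> \<Union> (f ` W)"
    by (rule strongly_reflects_continuous_chain[OF assms(1)])
  then show "?chain S" by blast
next
  assume chains: "\<forall>S. S \<subseteq> ctbl_subsets X \<longrightarrow> proj_stationary W X S \<longrightarrow> ?chain S"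
  show "SRP W X" unfolding SRP_def
  proof (intro allI impI)
    fix S assume S: "S \<subseteq> ctbl_subsets X" "proj_stationary W X S"
    obtain f where f: "\<forall>a\<in>W. f a \<in> S" "increasing_on W r f" "continuous_on_ord W r f"
      "W \<subseteq> \<Union> (f ` W)" using chains[rule_format, OF S] by blast
    have fS: "f ` W \<subseteq> S" and ct: "\<forall>a\<in>W. countable (f a)" and "\<Union> (f ` W) \<subseteq> X"
      using f(1) S(1) unfolding ctbl_subsets_def by blast+
    show "\<exists>Z. W \<subseteq> Z \<and> Z \<subseteq> X \<and> Z \<approx> W \<and> strongly_reflects S Z"
    proof (intro exI conjI)
      show "\<Union> (f ` W) \<approx> W" "strongly_reflects S (\<Union> (f ` W))"
        using Union_continuous_chain_strongly_reflects[OF assms(1) fS ct f(2-4)] by blast+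
    qed fact+
  qed
qed

end
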